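(* Let $K$ be a Cantor set and let $G$ be a nonempty full subgraph of $\mathscr{C}(K)$ which is invariant under the action of $\mathrm{Homeo}(K)$ (given by $f(U\sqcup V)=f(U)\sqcup f(V)$). Then $G$, with its own graph metric, has diameter exactly $2$.
   Context: A cut of a Stone space $X$ (compact, Hausdorff, totally disconnected) is an unordered partition of $X$ into two disjoint clopen sets $U,V$, written $U\sqcup V$; it is non-peripheral if each of $U,V$ contains at least two points. Two cuts $U\sqcup V$, $U'\sqcup V'$ cross if all four sets $U\cap U'$, $U\cap V'$, $V\cap U'$, $V\cap V'$ are nonempty; otherwise they are compatible. The complex of cuts $\mathscr{C}(X)$ is the simplicial graph whose vertices are the non-peripheral cuts of $X$, with edges between distinct compatible cuts. A full subgraph is an induced subgraph on a subset of the vertices. *)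

theory Defs
  imports "HOL-Analysis.Analysis"
begin

definition cantor_space :: "(nat \<Rightarrow> bool) topology" where
  "cantor_space = product_topology (\<lambda>_. discrete_topology (UNIV :: bool set)) UNIV"

definition is_cantor_set :: "'a topology \<Rightarrow> bool" where
  "is_cantor_set X \<longleftrightarrow> X homeomorphic_space cantor_space"

definition is_cut :: "'a topology \<Rightarrow> 'a set set \<Rightarrow> bool" where
  "is_cut X c \<longleftrightarrow> (\<exists>U V. c = {U, V} \<and> openin X U \<and> closedin X U \<and> openin X V \<and> closedin X V
      \<and> U \<inter> V = {} \<and> U \<union> V = topspace X)"

definition nonperipheral_cut :: "'a topology \<Rightarrow> 'a set set \<Rightarrow> bool" where
  "nonperipheral_cut X c \<longleftrightarrow> (\<exists>U V. c = {U, V} \<and> openin X U \<and> closedin X U \<and> openin X V \<and> closedin X V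
      \<and> U \<inter> V = {} \<and> U \<union> V = topspace X
      \<and> (\<exists>a b. a \<noteq> b \<and> a \<in> U \<and> b \<in> U) \<and> (\<exists>a b. a \<noteq> b \<and> a \<in> V \<and> b \<in> V))"

definition cuts_cross :: "'a set set \<Rightarrow> 'a set set \<Rightarrow> bool" where
  "cuts_cross c c' \<longleftrightarrow> (\<forall>A\<in>c. \<forall>B\<in>c'. A \<inter> B \<noteq> {})"

definition cut_vertices :: "'a topology \<Rightarrow> 'a set set set" where
  "cut_vertices X = {c. nonperipheral_cut X c}"

definition cut_edge :: "'a set set \<Rightarrow> 'a set set \<Rightarrow> bool" where
  "cut_edge c c' \<longleftrightarrow> c \<noteq> c' \<and> \<not> cuts_cross c c'"

definition cut_action :: "('a \<Rightarrow> 'a) \<Rightarrow> 'a set set \<Rightarrow> 'a set set" where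
  "cut_action f c = (\<lambda>A. f ` A) ` c"

text \<open>Generic graph notions for the full subgraph induced on vertex set S by edge relation E.\<close>
definition is_walk :: "('v \<Rightarrow> 'v \<Rightarrow> bool) \<Rightarrow> 'v set \<Rightarrow> 'v list \<Rightarrow> bool" where
  "is_walk E S p \<longleftrightarrow> p \<noteq> [] \<and> set p \<subseteq> S \<and> (\<forall>i. Suc i < length p \<longrightarrow> E (p ! i) (p ! Suc i))"

text \<open>Graph distance in the induced subgraph (infinity if no walk exists).\<close>
definition graph_dist :: "('v \<Rightarrow> 'v \<Rightarrow> bool) \<Rightarrow> 'v set \<Rightarrow> 'v \<Rightarrow> 'v \<Rightarrow> enat" where
  "graph_dist E S x y = (INF p \<in> {p. is_walk E S p \<and> hd p = x \<and> last p = y}. enat (length p - 1))"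

definition graph_diameter :: "('v \<Rightarrow> 'v \<Rightarrow> bool) \<Rightarrow> 'v set \<Rightarrow> enat" where
  "graph_diameter E S = (SUP x \<in> S. SUP y \<in> S. graph_dist E S x y)"

end

theory Submission
  imports Defs
begin

text \<open>A clopen subset of the Cantor space \<open>2\<^sup>\<nat>\<close> depends on finitely many coordinates. Listing the
  words of the relevant length that lead into the set first, and replacing the \<open>i\<close>-th word by the
  \<open>i\<close>-th word of a complete prefix code whose first words begin with \<open>True\<close> and the others
  with \<open>False\<close>, yields a homeomorphism carrying any non-peripheral cut to the cut by the first coordinate. So the
  homeomorphism group acts transitively on the vertices of the complex of cuts, and a nonempty
  invariant full subgraph is the whole complex. Its diameter is 2: there are crossing cuts, and
  two crossing cuts \<open>U \<sqcup> -U\<close>, \<open>U' \<sqcup> -U'\<close> are both compatible with the cut by a cylinder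
  properly contained in \<open>U \<inter> U'\<close>.\<close>

section \<open>Cylinders and clopen subsets of the Cantor space\<close>

definition cylinder :: "nat \<Rightarrow> (nat \<Rightarrow> bool) \<Rightarrow> (nat \<Rightarrow> bool) set" where
  "cylinder n x = {y. \<forall>i<n. y i = x i}"

lemma topspace_cantor_space [simp]: "topspace cantor_space = UNIV"
  by (simp add: cantor_space_def)

lemma openin_cantor_space_Compl_iff: "openin cantor_space (- U) \<longleftrightarrow> closedin cantor_space U"
  unfolding closedin_def by (metis topspace_cantor_space Compl_eq_Diff_UNIV subset_UNIV)

lemma openin_cantor_space_finite_dependence:
  assumes "\<And>x y. (\<And>i. i < N \<Longrightarrow> x i = y i) \<Longrightarrow> x \<in> U \<longleftrightarrow> y \<in> U"
  shows "openin cantor_space U"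
  unfolding cantor_space_def openin_product_topology_alt
proof
  fix x assume "x \<in> U"
  define V where "V i = (if i < N then {x i} else UNIV)" for i
  have "{i. V i \<noteq> UNIV} \<subseteq> {..<N}"
    by (auto simp: V_def)
  then have "finite {i \<in> UNIV. V i \<noteq> topspace (discrete_topology UNIV)}"
    by (auto intro: finite_subset)
  moreover have "Pi\<^sub>E UNIV V \<subseteq> U"
  proof
    fix y assume "y \<in> Pi\<^sub>E UNIV V"
    then have "y i \<in> V i" for i
      by (simp add: PiE_iff)
    then have "x i = y i" if "i < N" for i
      using that by (metis V_def singletonD)
    then show "y \<in> U"
      using assms[of x y] \<open>x \<in> U\<close> by blast
  qed
  moreover have "x \<in> Pi\<^sub>E UNIV V"
    by (auto simp: V_def)
  ultimately show "\<exists>V. finite {i \<in> UNIV. V i \<noteq> topspace (discrete_topology UNIV)} \<and>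
      (\<forall>i\<in>UNIV. openin (discrete_topology UNIV) (V i)) \<and> x \<in> Pi\<^sub>E UNIV V \<and> Pi\<^sub>E UNIV V \<subseteq> U"
    by auto
qed

lemma clopen_finite_dependence:
  assumes "\<And>x y. (\<And>i. i < N \<Longrightarrow> x i = y i) \<Longrightarrow> x \<in> U \<longleftrightarrow> y \<in> U"
  shows "openin cantor_space U" "closedin cantor_space U"
proof -
  show "openin cantor_space U"
    using assms by (rule openin_cantor_space_finite_dependence)
  have "openin cantor_space (- U)"
  proof (rule openin_cantor_space_finite_dependence[of N])
    fix x y :: "nat \<Rightarrow> bool" assume "\<And>i. i < N \<Longrightarrow> x i = y i"
    then have "x \<in> U \<longleftrightarrow> y \<in> U"
      by (rule assms)
    then show "x \<in> - U \<longleftrightarrow> y \<in> - U"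
      by simp
  qed
  then show "closedin cantor_space U"
    by (simp only: openin_cantor_space_Compl_iff)
qed

lemma continuous_map_finite_dependence:
  assumes "\<And>x y. (\<And>i. i < N \<Longrightarrow> x i = y i) \<Longrightarrow> g x = g y"
  shows "continuous_map cantor_space (discrete_topology UNIV) g"
  unfolding continuous_map_def
proof (intro conjI allI impI)
  fix A :: "'a set"
  show "openin cantor_space {x \<in> topspace cantor_space. g x \<in> A}"
  proof (rule openin_cantor_space_finite_dependence[of N])
    fix x y :: "nat \<Rightarrow> bool" assume "\<And>i. i < N \<Longrightarrow> x i = y i"
    then have "g x = g y"
      by (rule assms)
    then show "x \<in> {x \<in> topspace cantor_space. g x \<in> A} \<longleftrightarrow> y \<in> {x \<in> topspace cantor_space. g x \<in> A}"
      by simp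
  qed
qed (simp add: Pi_iff)

lemma self_in_cylinder: "x \<in> cylinder n x"
  by (simp add: cylinder_def)

lemma clopen_cylinder: "openin cantor_space (cylinder n x)" "closedin cantor_space (cylinder n x)"
  by (rule clopen_finite_dependence[of n]; simp add: cylinder_def)+

lemma openin_cantor_space_cylinder_subset:
  assumes "openin cantor_space U" "x \<in> U"
  shows "\<exists>n. cylinder n x \<subseteq> U"
proof -
  obtain V where V: "finite {i \<in> UNIV. V i \<noteq> topspace (discrete_topology (UNIV::bool set))}"
    "x \<in> Pi\<^sub>E UNIV V" "Pi\<^sub>E UNIV V \<subseteq> U"
    using assms unfolding cantor_space_def openin_product_topology_alt by blast
  define n where "n = Suc (Max (insert 0 {i. V i \<noteq> UNIV}))"
  have "i < n" if "V i \<noteq> UNIV" for i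
    using V(1) that by (simp add: n_def le_imp_less_Suc)
  then have "y i \<in> V i" if "y \<in> cylinder n x" for y i
    using V(2) that by (cases "V i = UNIV") (auto simp: cylinder_def PiE_iff)
  then have "cylinder n x \<subseteq> Pi\<^sub>E UNIV V"
    by (auto simp: PiE_iff)
  with V(3) show ?thesis
    by blast
qed

lemma cylinder_subset_if_finite_dependence:
  assumes "\<And>x y. (\<And>i. i < N \<Longrightarrow> x i = y i) \<Longrightarrow> x \<in> U \<longleftrightarrow> y \<in> U" "x \<in> U" "N \<le> n"
  shows "cylinder n x \<subseteq> U"
proof
  fix y assume "y \<in> cylinder n x"
  then have "y i = x i" if "i < N" for i
    using that assms(3) by (simp add: cylinder_def)
  then show "y \<in> U"
    using assms(1)[of y x] assms(2) by blast
qed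

text \<open>By compactness, finitely many cylinders, each contained in \<open>U\<close> or in \<open>-U\<close>,
  cover the space.\<close>

lemma clopen_cantor_space_finite_dependence:
  assumes "openin cantor_space U" "closedin cantor_space U"
  obtains N where "\<And>x y. (\<And>i. i < N \<Longrightarrow> x i = y i) \<Longrightarrow> x \<in> U \<longleftrightarrow> y \<in> U"
proof -
  have "openin cantor_space (- U)"
    using assms(2) by (simp only: openin_cantor_space_Compl_iff)
  then have "\<exists>n. cylinder n x \<subseteq> U \<or> cylinder n x \<subseteq> - U" for x
    using openin_cantor_space_cylinder_subset[OF assms(1), of x]
      openin_cantor_space_cylinder_subset[of "- U" x] by blast
  then obtain n where n: "\<And>x. cylinder (n x) x \<subseteq> U \<or> cylinder (n x) x \<subseteq> - U"
    by metis
  have "compact_space cantor_space"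
    by (simp add: cantor_space_def compact_space_product_topology compact_space_discrete_topology)
  then have compact: "\<And>\<U>. \<forall>C\<in>\<U>. openin cantor_space C \<Longrightarrow> UNIV \<subseteq> \<Union>\<U> \<Longrightarrow>
      \<exists>\<F>. finite \<F> \<and> \<F> \<subseteq> \<U> \<and> UNIV \<subseteq> \<Union>\<F>"
    unfolding compact_space_def compactin_def by simp
  have "\<forall>C \<in> range (\<lambda>x. cylinder (n x) x). openin cantor_space C"
    by (auto simp: clopen_cylinder)
  moreover have "UNIV \<subseteq> (\<Union>x. cylinder (n x) x)"
    using self_in_cylinder by blast
  ultimately obtain F where F: "finite F" "F \<subseteq> range (\<lambda>x. cylinder (n x) x)" "UNIV \<subseteq> \<Union>F"
    using compact[of "range (\<lambda>x. cylinder (n x) x)"] by blast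
  then obtain C where C: "finite C" "F = (\<lambda>x. cylinder (n x) x) ` C"
    by (meson finite_subset_image)
  show thesis
  proof
    fix x y :: "nat \<Rightarrow> bool" assume xy: "\<And>i. i < Max (insert 0 (n ` C)) \<Longrightarrow> x i = y i"
    obtain c where c: "c \<in> C" "x \<in> cylinder (n c) c"
      using F(3) C(2) by blast
    have "n c \<le> Max (insert 0 (n ` C))"
      using C(1) c(1) by simp
    then have "y \<in> cylinder (n c) c"
      using c(2) xy by (auto simp: cylinder_def)
    with c(2) n[of c] show "x \<in> U \<longleftrightarrow> y \<in> U"
      by blast
  qed
qed

section \<open>Recoding homeomorphisms\<close>

definition is_prefix :: "bool list \<Rightarrow> (nat \<Rightarrow> bool) \<Rightarrow> bool" where
  "is_prefix w x \<longleftrightarrow> (\<forall>k<length w. x k = w ! k)"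

definition prepend :: "bool list \<Rightarrow> (nat \<Rightarrow> bool) \<Rightarrow> nat \<Rightarrow> bool" where
  "prepend w x = (\<lambda>k. if k < length w then w ! k else x (k - length w))"

definition shift :: "nat \<Rightarrow> (nat \<Rightarrow> bool) \<Rightarrow> nat \<Rightarrow> bool" where
  "shift n x = (\<lambda>k. x (k + n))"

definition complete_prefix_code :: "bool list list \<Rightarrow> bool" where
  "complete_prefix_code P \<longleftrightarrow> (\<forall>x. \<exists>!i. i < length P \<and> is_prefix (P ! i) x)"

definition code_index :: "bool list list \<Rightarrow> (nat \<Rightarrow> bool) \<Rightarrow> nat" where
  "code_index P x = (THE i. i < length P \<and> is_prefix (P ! i) x)"

definition recode :: "bool list list \<Rightarrow> bool list list \<Rightarrow> (nat \<Rightarrow> bool) \<Rightarrow> nat \<Rightarrow> bool" where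
  "recode P Q x = prepend (Q ! code_index P x) (shift (length (P ! code_index P x)) x)"

lemma is_prefix_prepend: "is_prefix w (prepend w x)"
  by (simp add: is_prefix_def prepend_def)

lemma shift_prepend: "shift (length w) (prepend w x) = x"
  by (simp add: shift_def prepend_def)

lemma prepend_shift: "is_prefix w x \<Longrightarrow> prepend w (shift (length w) x) = x"
  by (auto simp: is_prefix_def prepend_def shift_def fun_eq_iff)

lemma is_prefix_Cons: "is_prefix (b # w) x \<longleftrightarrow> x 0 = b \<and> is_prefix w (shift 1 x)"
  by (auto simp: is_prefix_def shift_def less_Suc_eq_0_disj)

lemma code_index_prefix:
  assumes "complete_prefix_code P"
  shows "code_index P x < length P" "is_prefix (P ! code_index P x) x"
  using theI'[of "\<lambda>i. i < length P \<and> is_prefix (P ! i) x"] assms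
  by (auto simp: complete_prefix_code_def code_index_def)

lemma code_index_unique:
  assumes "complete_prefix_code P" "i < length P" "is_prefix (P ! i) x"
  shows "code_index P x = i"
  using assms unfolding complete_prefix_code_def code_index_def by (intro the1_equality) auto

lemma code_index_recode:
  assumes "complete_prefix_code P" "complete_prefix_code Q" "length P = length Q"
  shows "code_index Q (recode P Q x) = code_index P x"
  using assms code_index_prefix[OF assms(1)]
  by (intro code_index_unique) (auto simp: recode_def is_prefix_prepend)

lemma recode_recode:
  assumes "complete_prefix_code P" "complete_prefix_code Q" "length P = length Q"
  shows "recode Q P (recode P Q x) = x"
  unfolding recode_def[of Q P] code_index_recode[OF assms]
  by (simp add: recode_def shift_prepend prepend_shift code_index_prefix[OF assms(1)])

lemma code_index_finite_dependence:
  assumes "complete_prefix_code P" "\<forall>w\<in>set P. length w \<le> N" "\<And>i. i < N \<Longrightarrow> x i = y i"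
  shows "code_index P x = code_index P y"
proof -
  have "length (P ! code_index P x) \<le> N"
    using assms(2) code_index_prefix(1)[OF assms(1)] by simp
  then have "is_prefix (P ! code_index P x) y"
    using code_index_prefix(2)[OF assms(1), of x] assms(3) by (auto simp: is_prefix_def)
  then show ?thesis
    using code_index_unique[OF assms(1) code_index_prefix(1)[OF assms(1)]] by simp
qed

lemma continuous_map_recode:
  assumes "complete_prefix_code P"
  shows "continuous_map cantor_space cantor_space (recode P Q)"
  unfolding cantor_space_def continuous_map_componentwise_UNIV
proof
  fix j
  define N where "N = sum_list (map length P)"
  have N: "\<forall>w\<in>set P. length w \<le> N"
    by (simp add: N_def member_le_sum_list)
  show "continuous_map (product_topology (\<lambda>_. discrete_topology UNIV) UNIV) (discrete_topology UNIV)
      (\<lambda>x. recode P Q x j)"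
    unfolding cantor_space_def[symmetric]
  proof (rule continuous_map_finite_dependence[of "N + j + 1"])
    fix x y :: "nat \<Rightarrow> bool" assume xy: "\<And>i. i < N + j + 1 \<Longrightarrow> x i = y i"
    have "code_index P y = code_index P x"
      by (intro code_index_finite_dependence[OF assms N] xy[symmetric]) simp
    moreover have "length (P ! code_index P x) \<le> N"
      using N code_index_prefix(1)[OF assms] by simp
    then have "shift (length (P ! code_index P x)) x k = shift (length (P ! code_index P x)) y k"
      if "k \<le> j" for k
      unfolding shift_def using that by (intro xy) linarith
    ultimately show "recode P Q x j = recode P Q y j"
      by (simp add: recode_def prepend_def)
  qed
qed

lemma homeomorphic_maps_recode:
  assumes "complete_prefix_code P" "complete_prefix_code Q" "length P = length Q"
  shows "homeomorphic_maps cantor_space cantor_space (recode P Q) (recode Q P)"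
  using continuous_map_recode[OF assms(1)] continuous_map_recode[OF assms(2)]
    recode_recode[OF assms] recode_recode[OF assms(2,1) assms(3)[symmetric]]
  by (simp add: homeomorphic_maps_def)

lemma complete_prefix_code_append:
  assumes A: "complete_prefix_code A" and B: "complete_prefix_code B"
  shows "complete_prefix_code (map (Cons True) A @ map (Cons False) B)" (is "complete_prefix_code ?J")
  unfolding complete_prefix_code_def
proof
  fix x
  have J: "j < length ?J \<and> is_prefix (?J ! j) x \<longleftrightarrow>
      (if x 0 then j < length A \<and> is_prefix (A ! j) (shift 1 x)
       else length A \<le> j \<and> j - length A < length B \<and> is_prefix (B ! (j - length A)) (shift 1 x))" for j
    by (auto simp: nth_append is_prefix_Cons)
  show "\<exists>!j. j < length ?J \<and> is_prefix (?J ! j) x"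
  proof (cases "x 0")
    case True
    with A show ?thesis
      unfolding J by (simp add: complete_prefix_code_def)
  next
    case False
    from B have "\<exists>!i. i < length B \<and> is_prefix (B ! i) (shift 1 x)"
      by (simp add: complete_prefix_code_def)
    then obtain i where i: "i < length B \<and> is_prefix (B ! i) (shift 1 x)"
      and unique: "\<And>k. k < length B \<and> is_prefix (B ! k) (shift 1 x) \<Longrightarrow> k = i"
      by (elim ex1E) blast
    show ?thesis
      unfolding J if_not_P[OF False]
    proof (rule ex1I[of _ "length A + i"])
      fix j assume "length A \<le> j \<and> j - length A < length B \<and> is_prefix (B ! (j - length A)) (shift 1 x)"
      then show "j = length A + i"
        using unique[of "j - length A"] by linarith
    qed (use i in simp)
  qed
qed

fun unary_code :: "nat \<Rightarrow> bool list list" where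
  "unary_code 0 = [[]]"
| "unary_code (Suc k) = map (Cons True) [[]] @ map (Cons False) (unary_code k)"

lemma length_unary_code: "length (unary_code k) = Suc k"
  by (induct k) auto

lemma complete_prefix_code_empty_word: "complete_prefix_code [[]]"
  unfolding complete_prefix_code_def is_prefix_def by (intro allI ex1I[of _ 0]) auto

lemma complete_prefix_code_unary_code: "complete_prefix_code (unary_code k)"
  by (induct k) (simp_all only: unary_code.simps complete_prefix_code_empty_word complete_prefix_code_append)

definition initial_word :: "nat \<Rightarrow> (nat \<Rightarrow> bool) \<Rightarrow> bool list" where
  "initial_word n x = map x [0..<n]"

lemma is_prefix_iff_initial_word: "length w = n \<Longrightarrow> is_prefix w x \<longleftrightarrow> w = initial_word n x"
  by (auto simp: is_prefix_def initial_word_def list_eq_iff_nth_eq)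

lemma complete_prefix_code_words:
  assumes "distinct P" "set P = {w. length w = N}"
  shows "complete_prefix_code P"
  unfolding complete_prefix_code_def
proof
  fix x
  have "initial_word N x \<in> set P"
    using assms(2) by (simp add: initial_word_def)
  then obtain i where i: "i < length P" "P ! i = initial_word N x"
    by (meson in_set_conv_nth)
  have prefix_iff: "is_prefix (P ! j) x \<longleftrightarrow> P ! j = initial_word N x" if "j < length P" for j
    using that assms(2) nth_mem by (intro is_prefix_iff_initial_word) blast
  show "\<exists>!i. i < length P \<and> is_prefix (P ! i) x"
  proof (rule ex1I[of _ i])
    fix j assume "j < length P \<and> is_prefix (P ! j) x"
    then show "j = i"
      using i prefix_iff nth_eq_iff_index_eq[OF assms(1)] by metis
  qed (use i prefix_iff in metis)
qed

lemma first_letter_code: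
  assumes "0 < a" "0 < b"
  shows "\<exists>Q. complete_prefix_code Q \<and> length Q = a + b \<and> (\<forall>i < a + b. Q ! i \<noteq> [] \<and> Q ! i ! 0 = (i < a))"
proof (intro exI conjI)
  let ?Q = "map (Cons True) (unary_code (a - 1)) @ map (Cons False) (unary_code (b - 1))"
  show "complete_prefix_code ?Q"
    by (intro complete_prefix_code_append complete_prefix_code_unary_code)
  show "length ?Q = a + b"
    using assms by (simp add: length_unary_code)
  show "\<forall>i < a + b. ?Q ! i \<noteq> [] \<and> ?Q ! i ! 0 = (i < a)"
    using assms by (auto simp: nth_append length_unary_code)
qed

lemma recode_first_coordinate:
  assumes dep: "\<And>x y. (\<And>i. i < N \<Longrightarrow> x i = y i) \<Longrightarrow> x \<in> U \<longleftrightarrow> y \<in> U"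
    and "u \<in> U" "v \<notin> U"
  obtains P Q where "complete_prefix_code P" "complete_prefix_code Q" "length P = length Q"
    "\<forall>x. x \<in> U \<longleftrightarrow> recode P Q x 0"
proof -
  define in_U where "in_U w \<longleftrightarrow> prepend w (\<lambda>_. False) \<in> U" for w
  have U_iff: "x \<in> U \<longleftrightarrow> in_U (initial_word N x)" for x
    unfolding in_U_def by (rule dep) (simp add: prepend_def initial_word_def)
  define W where "W = List.n_lists N [True, False]"
  have W: "distinct W" "set W = {w. length w = N}"
    by (auto simp: W_def set_n_lists intro: distinct_n_lists)
  define P where "P = filter in_U W @ filter (Not \<circ> in_U) W"
  define a where "a = length (filter in_U W)"
  have P: "complete_prefix_code P"
    using W by (intro complete_prefix_code_words[of _ N]) (auto simp: P_def)
  have in_U_P: "in_U (P ! i) \<longleftrightarrow> i < a" if "i < length P" for i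
    using that nth_mem[of i "filter in_U W"] nth_mem[of "i - a" "filter (Not \<circ> in_U) W"]
    by (cases "i < a") (auto simp: P_def a_def nth_append)
  have "initial_word N u \<in> set (filter in_U W)" "initial_word N v \<in> set (filter (Not \<circ> in_U) W)"
    using U_iff assms(2,3) W(2) by (auto simp: initial_word_def)
  then have "0 < a" "0 < length (filter (Not \<circ> in_U) W)"
    unfolding a_def by (metis length_pos_if_in_set)+
  moreover have "length P = a + length (filter (Not \<circ> in_U) W)"
    by (simp add: P_def a_def)
  ultimately obtain Q where Q: "complete_prefix_code Q" "length Q = length P"
      and Q_first: "\<forall>i < length P. Q ! i \<noteq> [] \<and> Q ! i ! 0 = (i < a)"
    using first_letter_code[of a "length (filter (Not \<circ> in_U) W)"] by auto
  show thesis
  proof (rule that[OF P Q(1) Q(2)[symmetric]], intro allI)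
    fix x
    define i where "i = code_index P x"
    have i: "i < length P" "is_prefix (P ! i) x"
      using code_index_prefix[OF P] by (simp_all add: i_def)
    have "P ! i \<in> set W"
      using nth_mem[OF i(1)] by (auto simp: P_def)
    then have "P ! i = initial_word N x"
      using i(2) W(2) is_prefix_iff_initial_word by blast
    then have "x \<in> U \<longleftrightarrow> i < a"
      using U_iff in_U_P[OF i(1)] by simp
    also have "\<dots> \<longleftrightarrow> recode P Q x 0"
      using Q_first i(1) by (simp add: recode_def prepend_def i_def)
    finally show "x \<in> U \<longleftrightarrow> recode P Q x 0" .
  qed
qed

section \<open>Transport of cuts along homeomorphisms\<close>

definition cut_image :: "('a \<Rightarrow> 'b) \<Rightarrow> 'a set set \<Rightarrow> 'b set set" where
  "cut_image h c = image h ` c"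

lemma cut_action_eq_cut_image: "cut_action = cut_image"
  by (simp add: fun_eq_iff cut_action_def cut_image_def)

lemma cut_image_comp: "cut_image (g \<circ> f) c = cut_image g (cut_image f c)"
  by (simp add: cut_image_def image_comp)

lemma nonperipheral_cut_subset_topspace:
  "nonperipheral_cut X c \<Longrightarrow> A \<in> c \<Longrightarrow> A \<subseteq> topspace X"
  unfolding nonperipheral_cut_def by blast

lemma cut_image_inverse:
  assumes "\<And>x. x \<in> topspace X \<Longrightarrow> g (f x) = x" "nonperipheral_cut X c"
  shows "cut_image g (cut_image f c) = c"
proof -
  have "g ` f ` A = A" if "A \<in> c" for A
    using nonperipheral_cut_subset_topspace[OF assms(2) that] assms(1)
    by (force simp: image_image)
  then show ?thesis
    by (simp add: cut_image_def image_image)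
qed

lemma nonperipheral_cut_image:
  assumes h: "homeomorphic_map X Y h" and c: "nonperipheral_cut X c"
  shows "nonperipheral_cut Y (cut_image h c)"
proof -
  have inj: "inj_on h (topspace X)"
    using homeomorphic_imp_injective_map[OF h] .
  obtain U V where UV: "c = {U, V}" "openin X U" "closedin X U" "openin X V" "closedin X V"
      "U \<inter> V = {}" "U \<union> V = topspace X"
      "\<exists>a b. a \<noteq> b \<and> a \<in> U \<and> b \<in> U" "\<exists>a b. a \<noteq> b \<and> a \<in> V \<and> b \<in> V"
    using c unfolding nonperipheral_cut_def by blast
  have sub: "U \<subseteq> topspace X" "V \<subseteq> topspace X"
    using UV(7) by auto
  have two_points: "\<exists>a b. a \<noteq> b \<and> a \<in> h ` S \<and> b \<in> h ` S"
    if S: "S \<subseteq> topspace X" "\<exists>a b. a \<noteq> b \<and> a \<in> S \<and> b \<in> S" for S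
  proof -
    obtain a b where "a \<noteq> b" "a \<in> S" "b \<in> S"
      using S(2) by blast
    with S(1) inj show ?thesis
      by (intro exI[of _ "h a"] exI[of _ "h b"]) (auto simp: inj_on_def)
  qed
  have "h ` U \<inter> h ` V = {}"
    using inj_on_image_Int[OF inj sub] UV(6) by simp
  moreover have "h ` U \<union> h ` V = topspace Y"
    using UV(7) homeomorphic_imp_surjective_map[OF h] by (simp flip: image_Un)
  moreover have "openin Y (h ` U)" "closedin Y (h ` U)" "openin Y (h ` V)" "closedin Y (h ` V)"
    using homeomorphic_map_openness[OF h sub(1)] homeomorphic_map_closedness[OF h sub(1)]
      homeomorphic_map_openness[OF h sub(2)] homeomorphic_map_closedness[OF h sub(2)] UV(2-5)
    by simp_all
  ultimately show ?thesis
    unfolding nonperipheral_cut_def cut_image_def UV(1) using two_points sub UV(8,9)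
    by (intro exI[of _ "h ` U"] exI[of _ "h ` V"]) simp
qed

lemma not_cuts_cross_self: "nonperipheral_cut X c \<Longrightarrow> \<not> cuts_cross c c"
  unfolding nonperipheral_cut_def cuts_cross_def by blast

lemma cuts_cross_image:
  assumes "inj_on h (\<Union>c \<union> \<Union>d)"
  shows "cuts_cross (cut_image h c) (cut_image h d) \<longleftrightarrow> cuts_cross c d"
proof -
  have "h ` A \<inter> h ` B = h ` (A \<inter> B)" if "A \<in> c" "B \<in> d" for A B
    using that by (intro inj_on_image_Int[OF assms, symmetric]) auto
  then show ?thesis
    unfolding cuts_cross_def cut_image_def by auto
qed

lemma cut_edge_image:
  assumes hk: "homeomorphic_maps X Y h k" and c: "nonperipheral_cut X c" and d: "nonperipheral_cut X d"
  shows "cut_edge (cut_image h c) (cut_image h d) \<longleftrightarrow> cut_edge c d"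
proof -
  have kh: "\<And>x. x \<in> topspace X \<Longrightarrow> k (h x) = x"
    using hk by (simp add: homeomorphic_maps_def)
  have "inj_on h (\<Union>c \<union> \<Union>d)"
    using kh nonperipheral_cut_subset_topspace[OF c] nonperipheral_cut_subset_topspace[OF d]
    by (intro inj_on_inverseI[of _ k]) blast
  moreover have "cut_image h c = cut_image h d \<longleftrightarrow> c = d"
    using cut_image_inverse[where g = k and f = h, OF kh] c d by metis
  ultimately show ?thesis
    by (simp add: cut_edge_def cuts_cross_image)
qed

section \<open>Cuts of the Cantor space\<close>

definition coordinate_cut :: "nat \<Rightarrow> (nat \<Rightarrow> bool) set set" where
  "coordinate_cut k = {{x. x k}, {x. \<not> x k}}"

lemma openin_cantor_space_two_points:
  assumes "openin cantor_space U" "x \<in> U"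
  shows "\<exists>y\<in>U. y \<noteq> x"
proof -
  obtain n where "cylinder n x \<subseteq> U"
    using openin_cantor_space_cylinder_subset[OF assms] by blast
  moreover have "x(n := \<not> x n) \<in> cylinder n x"
    by (simp add: cylinder_def)
  ultimately show ?thesis
    by (metis fun_upd_same subsetD)
qed

lemma nonperipheral_cut_cantor_space_iff:
  "nonperipheral_cut cantor_space c \<longleftrightarrow>
    (\<exists>U. c = {U, - U} \<and> openin cantor_space U \<and> closedin cantor_space U \<and> U \<noteq> {} \<and> U \<noteq> UNIV)"
proof
  assume "nonperipheral_cut cantor_space c"
  then obtain U V where "c = {U, V}" "openin cantor_space U" "closedin cantor_space U"
      "U \<inter> V = {}" "U \<union> V = UNIV" "U \<noteq> {}" "V \<noteq> {}"
    unfolding nonperipheral_cut_def by fastforce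
  moreover have "V = - U"
    using calculation by blast
  ultimately show "\<exists>U. c = {U, - U} \<and> openin cantor_space U \<and> closedin cantor_space U \<and> U \<noteq> {} \<and> U \<noteq> UNIV"
    by blast
next
  assume "\<exists>U. c = {U, - U} \<and> openin cantor_space U \<and> closedin cantor_space U \<and> U \<noteq> {} \<and> U \<noteq> UNIV"
  then obtain U where U: "c = {U, - U}" "openin cantor_space U" "closedin cantor_space U" "U \<noteq> {}" "U \<noteq> UNIV"
    by blast
  have Compl: "openin cantor_space (- U)" "closedin cantor_space (- U)"
    using U(2,3) openin_cantor_space_Compl_iff[of U] openin_cantor_space_Compl_iff[of "- U"] by simp_all
  obtain u v where "u \<in> U" "v \<in> - U"
    using U(4,5) by blast
  then have "\<exists>a b. a \<noteq> b \<and> a \<in> U \<and> b \<in> U" "\<exists>a b. a \<noteq> b \<and> a \<in> - U \<and> b \<in> - U"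
    using openin_cantor_space_two_points U(2) Compl(1) by metis+
  then show "nonperipheral_cut cantor_space c"
    unfolding nonperipheral_cut_def using U Compl
    by (intro exI[of _ U] exI[of _ "- U"]) simp
qed

lemma image_eq_Collect_if_inverse:
  assumes "\<And>y. f (g y) = y" "\<And>x. x \<in> A \<longleftrightarrow> P (f x)"
  shows "f ` A = {y. P y}"
proof
  show "f ` A \<subseteq> {y. P y}"
    using assms(2) by blast
  show "{y. P y} \<subseteq> f ` A"
  proof
    fix y assume "y \<in> {y. P y}"
    then have "g y \<in> A"
      using assms by simp
    then show "y \<in> f ` A"
      using assms(1)[of y] by (metis imageI)
  qed
qed

lemma cantor_space_cut_to_coordinate_cut:
  assumes "nonperipheral_cut cantor_space c"
  obtains f g where "homeomorphic_maps cantor_space cantor_space f g" "cut_action f c = coordinate_cut 0"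
proof -
  obtain U where U: "c = {U, - U}" "openin cantor_space U" "closedin cantor_space U" "U \<noteq> {}" "U \<noteq> UNIV"
    using assms unfolding nonperipheral_cut_cantor_space_iff by blast
  obtain N where "\<And>x y. (\<And>i. i < N \<Longrightarrow> x i = y i) \<Longrightarrow> x \<in> U \<longleftrightarrow> y \<in> U"
    using clopen_cantor_space_finite_dependence[OF U(2,3)] by blast
  moreover obtain u v where "u \<in> U" "v \<notin> U"
    using U(4,5) by blast
  ultimately obtain P Q where PQ: "complete_prefix_code P" "complete_prefix_code Q" "length P = length Q"
      and U_iff: "\<forall>x. x \<in> U \<longleftrightarrow> recode P Q x 0"
    using recode_first_coordinate by blast
  have inverse: "recode P Q (recode Q P y) = y" for y
    using recode_recode[OF PQ(2,1) PQ(3)[symmetric]] .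
  have "recode P Q ` U = {y. y 0}" "recode P Q ` (- U) = {y. \<not> y 0}"
    using U_iff by (auto intro!: image_eq_Collect_if_inverse[of "recode P Q" "recode Q P"] inverse)
  then have "cut_action (recode P Q) c = coordinate_cut 0"
    by (simp add: U(1) cut_action_def coordinate_cut_def)
  with homeomorphic_maps_recode[OF PQ] show thesis
    by (rule that)
qed

lemma cantor_space_cut_transitive:
  assumes "c \<in> cut_vertices cantor_space" "d \<in> cut_vertices cantor_space"
  shows "\<exists>f. homeomorphic_map cantor_space cantor_space f \<and> cut_action f c = d"
proof -
  have cuts: "nonperipheral_cut cantor_space c" "nonperipheral_cut cantor_space d"
    using assms by (simp_all add: cut_vertices_def)
  obtain f f' where f: "homeomorphic_maps cantor_space cantor_space f f'" "cut_action f c = coordinate_cut 0"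
    using cuts(1) by (rule cantor_space_cut_to_coordinate_cut)
  obtain g g' where g: "homeomorphic_maps cantor_space cantor_space g g'" "cut_action g d = coordinate_cut 0"
    using cuts(2) by (rule cantor_space_cut_to_coordinate_cut)
  have "cut_action g' (coordinate_cut 0) = d"
    using g cut_image_inverse[of cantor_space g' g d] cuts(2)
    by (simp add: cut_action_eq_cut_image homeomorphic_maps_def)
  moreover have "homeomorphic_map cantor_space cantor_space (g' \<circ> f)"
    using homeomorphic_maps_map[of _ _ f f'] homeomorphic_maps_map[of _ _ g g'] f(1) g(1)
    by (metis homeomorphic_map_compose)
  ultimately show ?thesis
    using f(2) by (auto simp: cut_action_eq_cut_image cut_image_comp)
qed

lemma coordinate_cut_in_cut_vertices: "coordinate_cut k \<in> cut_vertices cantor_space"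
proof -
  have "openin cantor_space {x. x k}" "closedin cantor_space {x. x k}"
    by (rule clopen_finite_dependence[of "Suc k"]; simp)+
  moreover have "(\<lambda>_. True) \<in> {x. x k}" "(\<lambda>_. False) \<notin> {x. x k}"
    by simp_all
  ultimately have "\<exists>U. coordinate_cut k = {U, - U} \<and> openin cantor_space U \<and> closedin cantor_space U
      \<and> U \<noteq> {} \<and> U \<noteq> UNIV"
    unfolding coordinate_cut_def by (intro exI[of _ "{x. x k}"]) (auto simp flip: Collect_neg_eq)
  then show ?thesis
    by (simp add: cut_vertices_def nonperipheral_cut_cantor_space_iff)
qed

lemma cuts_cross_coordinate_cuts:
  assumes "j \<noteq> k"
  shows "cuts_cross (coordinate_cut j) (coordinate_cut k)"
proof -
  have "(\<lambda>i. if i = j then a else b) \<in> {x. x j = a} \<inter> {x. x k = b}" for a b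
    using assms by simp
  then have "{x. x j = a} \<inter> {x. x k = b} \<noteq> {}" for a b
    by (metis empty_iff)
  from this[of True True] this[of True False] this[of False True] this[of False False]
  show ?thesis
    by (simp add: cuts_cross_def coordinate_cut_def)
qed

lemma cut_edge_nested:
  assumes "W \<subseteq> U" "W \<noteq> U" "W \<noteq> {}"
  shows "cut_edge {U, - U} {W, - W}" "cut_edge {W, - W} {U, - U}"
proof -
  have "{U, - U} \<noteq> {W, - W}"
    using assms by (auto simp: doubleton_eq_iff)
  moreover have "\<not> cuts_cross {U, - U} {W, - W}" "\<not> cuts_cross {W, - W} {U, - U}"
    using assms(1) by (auto simp: cuts_cross_def)
  ultimately show "cut_edge {U, - U} {W, - W}" "cut_edge {W, - W} {U, - U}"
    by (auto simp: cut_edge_def)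
qed

lemma cantor_space_common_neighbour:
  assumes "c \<in> cut_vertices cantor_space" "d \<in> cut_vertices cantor_space" "cuts_cross c d"
  shows "\<exists>e\<in>cut_vertices cantor_space. cut_edge c e \<and> cut_edge e d"
proof -
  obtain U where U: "c = {U, - U}" "openin cantor_space U" "closedin cantor_space U"
    using assms(1) by (auto simp: cut_vertices_def nonperipheral_cut_cantor_space_iff)
  obtain U' where U': "d = {U', - U'}" "openin cantor_space U'" "closedin cantor_space U'"
    using assms(2) by (auto simp: cut_vertices_def nonperipheral_cut_cantor_space_iff)
  obtain x where x: "x \<in> U" "x \<in> U'"
    using assms(3) U(1) U'(1) by (auto simp: cuts_cross_def)
  obtain N where N: "\<And>x y. (\<And>i. i < N \<Longrightarrow> x i = y i) \<Longrightarrow> x \<in> U \<longleftrightarrow> y \<in> U"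
    using clopen_cantor_space_finite_dependence[OF U(2,3)] by blast
  obtain N' where N': "\<And>x y. (\<And>i. i < N' \<Longrightarrow> x i = y i) \<Longrightarrow> x \<in> U' \<longleftrightarrow> y \<in> U'"
    using clopen_cantor_space_finite_dependence[OF U'(2,3)] by blast
  define n where "n = N + N'"
  define W where "W = cylinder (Suc n) x"
  have "cylinder n x \<subseteq> U" "cylinder n x \<subseteq> U'"
    using cylinder_subset_if_finite_dependence[where N = N, OF N x(1)]
      cylinder_subset_if_finite_dependence[where N = N', OF N' x(2)]
    by (simp_all add: n_def)
  moreover have "W \<subseteq> cylinder n x"
    by (auto simp: W_def cylinder_def)
  moreover have "x(n := \<not> x n) \<in> cylinder n x - W"
    by (simp add: W_def cylinder_def)
  moreover have "x \<in> W"
    by (simp add: W_def self_in_cylinder)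
  ultimately have "W \<subseteq> U" "W \<noteq> U" "W \<subseteq> U'" "W \<noteq> U'" "W \<noteq> {}" "W \<noteq> UNIV"
    by blast+
  moreover have "{W, - W} \<in> cut_vertices cantor_space"
    using \<open>W \<noteq> {}\<close> \<open>W \<noteq> UNIV\<close> clopen_cylinder
    unfolding cut_vertices_def nonperipheral_cut_cantor_space_iff W_def by blast
  ultimately show ?thesis
    unfolding U(1) U'(1) using cut_edge_nested by blast
qed

section \<open>Cuts of a Cantor set\<close>

lemma cantor_set_cut_transitive:
  assumes "is_cantor_set K" "c \<in> cut_vertices K" "d \<in> cut_vertices K"
  shows "\<exists>f. homeomorphic_map K K f \<and> cut_action f c = d"
proof -
  obtain h k where hk: "homeomorphic_maps K cantor_space h k"
    using assms(1) by (auto simp: is_cantor_set_def homeomorphic_space_def)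
  have h: "homeomorphic_map K cantor_space h" and k: "homeomorphic_map cantor_space K k"
    using hk by (simp_all add: homeomorphic_maps_map)
  have kh: "\<And>x. x \<in> topspace K \<Longrightarrow> k (h x) = x"
    using hk by (simp add: homeomorphic_maps_def)
  have cuts: "nonperipheral_cut K c" "nonperipheral_cut K d"
    using assms(2,3) by (simp_all add: cut_vertices_def)
  then have "cut_image h c \<in> cut_vertices cantor_space" "cut_image h d \<in> cut_vertices cantor_space"
    using nonperipheral_cut_image[OF h] by (simp_all add: cut_vertices_def)
  then obtain f where f: "homeomorphic_map cantor_space cantor_space f"
      "cut_image f (cut_image h c) = cut_image h d"
    using cantor_space_cut_transitive by (metis cut_action_eq_cut_image)
  have "homeomorphic_map K K (k \<circ> (f \<circ> h))"
    by (rule homeomorphic_map_compose[OF homeomorphic_map_compose[OF h f(1)] k])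
  moreover have "cut_image (k \<circ> (f \<circ> h)) c = d"
    using f(2) cut_image_inverse[where g = k and f = h, OF kh cuts(2)] by (simp add: cut_image_comp)
  ultimately show ?thesis
    by (auto simp: cut_action_eq_cut_image)
qed

lemma cantor_set_crossing_cuts:
  assumes "is_cantor_set K"
  shows "\<exists>c\<in>cut_vertices K. \<exists>d\<in>cut_vertices K. cuts_cross c d"
proof -
  obtain h k where "homeomorphic_maps K cantor_space h k"
    using assms by (auto simp: is_cantor_set_def homeomorphic_space_def)
  then have k: "homeomorphic_map cantor_space K k"
    by (simp add: homeomorphic_maps_map)
  have "inj k"
    using homeomorphic_imp_injective_map[OF k] by simp
  then have "cuts_cross (cut_image k (coordinate_cut 0)) (cut_image k (coordinate_cut 1))"
    using cuts_cross_coordinate_cuts[of 0 1] by (simp add: cuts_cross_image inj_on_subset)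
  moreover have "cut_image k (coordinate_cut j) \<in> cut_vertices K" for j
    using nonperipheral_cut_image[OF k] coordinate_cut_in_cut_vertices
    by (simp add: cut_vertices_def)
  ultimately show ?thesis
    by blast
qed

lemma cantor_set_common_neighbour:
  assumes "is_cantor_set K" "c \<in> cut_vertices K" "d \<in> cut_vertices K" "cuts_cross c d"
  shows "\<exists>e\<in>cut_vertices K. cut_edge c e \<and> cut_edge e d"
proof -
  obtain h k where hk: "homeomorphic_maps K cantor_space h k"
    using assms(1) by (auto simp: is_cantor_set_def homeomorphic_space_def)
  have h: "homeomorphic_map K cantor_space h" and k: "homeomorphic_map cantor_space K k"
    using hk by (simp_all add: homeomorphic_maps_map)
  have hk': "\<And>y. h (k y) = y"
    using hk by (simp add: homeomorphic_maps_def)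
  have cuts: "nonperipheral_cut K c" "nonperipheral_cut K d"
    using assms(2,3) by (simp_all add: cut_vertices_def)
  have "\<Union>c \<union> \<Union>d \<subseteq> topspace K"
    using nonperipheral_cut_subset_topspace[OF cuts(1)] nonperipheral_cut_subset_topspace[OF cuts(2)]
    by blast
  then have "inj_on h (\<Union>c \<union> \<Union>d)"
    by (rule inj_on_subset[OF homeomorphic_imp_injective_map[OF h]])
  then have "cuts_cross (cut_image h c) (cut_image h d)"
    using assms(4) by (simp add: cuts_cross_image)
  moreover have "cut_image h c \<in> cut_vertices cantor_space" "cut_image h d \<in> cut_vertices cantor_space"
    using cuts nonperipheral_cut_image[OF h] by (simp_all add: cut_vertices_def)
  ultimately obtain e where e: "nonperipheral_cut cantor_space e"
      "cut_edge (cut_image h c) e" "cut_edge e (cut_image h d)"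
    using cantor_space_common_neighbour by (auto simp: cut_vertices_def)
  have e': "nonperipheral_cut K (cut_image k e)" "cut_image h (cut_image k e) = e"
    using nonperipheral_cut_image[OF k e(1)] cut_image_inverse[where g = h and f = k, OF hk' e(1)]
    by simp_all
  then have "cut_edge c (cut_image k e)" "cut_edge (cut_image k e) d"
    using e(2,3) cut_edge_image[OF hk] cuts by metis+
  with e'(1) show ?thesis
    by (auto simp: cut_vertices_def)
qed

section \<open>Graphs of diameter two\<close>

lemma graph_dist_le_walk:
  assumes "is_walk E S p" "hd p = x" "last p = y"
  shows "graph_dist E S x y \<le> enat (length p - 1)"
  unfolding graph_dist_def using assms by (intro INF_lower) simp

lemma walk_length_ge_3:
  assumes "is_walk E S p" "hd p = x" "last p = y" "x \<noteq> y" "\<not> E x y"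
  shows "3 \<le> length p"
proof (rule ccontr)
  assume "\<not> 3 \<le> length p"
  moreover have "length p \<noteq> 0"
    using assms(1) by (simp add: is_walk_def)
  ultimately have "length p = Suc 0 \<or> length p = Suc (Suc 0)"
    by linarith
  then consider a where "p = [a]" | a b where "p = [a, b]"
    by (auto simp: length_Suc_conv)
  then show False
  proof cases
    case 1
    with assms(2-4) show False
      by simp
  next
    case 2
    with assms(1) have "E a b"
      unfolding is_walk_def by (metis One_nat_def length_Cons less_Suc_eq list.size(3) nth_Cons_0 nth_Cons_Suc)
    with 2 assms(2,3,5) show False
      by simp
  qed
qed

lemma graph_diameter_eq_2:
  assumes "x \<in> S" "y \<in> S" "x \<noteq> y" "\<not> E x y"
    and common_neighbour: "\<And>x y. x \<in> S \<Longrightarrow> y \<in> S \<Longrightarrow> x \<noteq> y \<Longrightarrow> \<not> E x y \<Longrightarrow> \<exists>z\<in>S. E x z \<and> E z y"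
  shows "graph_diameter E S = 2"
proof (rule antisym)
  have "graph_dist E S u v \<le> 2" if uv: "u \<in> S" "v \<in> S" for u v
  proof -
    consider "u = v" | "u \<noteq> v" "E u v" | z where "z \<in> S" "E u z" "E z v"
      using common_neighbour uv by blast
    then obtain p where p: "is_walk E S p" "hd p = u" "last p = v" "length p \<le> 3"
    proof cases
      case 1
      with uv show thesis
        by (intro that[of "[u]"]) (auto simp: is_walk_def)
    next
      case 2
      with uv show thesis
        by (intro that[of "[u, v]"]) (auto simp: is_walk_def)
    next
      case 3
      with uv show thesis
        by (intro that[of "[u, z, v]"]) (auto simp: is_walk_def less_Suc_eq nth_Cons')
    qed
    have "graph_dist E S u v \<le> enat (length p - 1)"
      using p(1-3) by (rule graph_dist_le_walk)
    also have "\<dots> \<le> 2"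
      using p(4) by (simp add: numeral_eq_enat)
    finally show ?thesis .
  qed
  then show "graph_diameter E S \<le> 2"
    unfolding graph_diameter_def by (intro SUP_least) auto
next
  have "2 \<le> graph_dist E S x y"
    unfolding graph_dist_def
  proof (rule INF_greatest)
    fix p assume "p \<in> {p. is_walk E S p \<and> hd p = x \<and> last p = y}"
    then have "3 \<le> length p"
      using walk_length_ge_3[where x = x and y = y] assms(3,4) by blast
    then show "2 \<le> enat (length p - 1)"
      by (simp add: numeral_eq_enat)
  qed
  then show "2 \<le> graph_diameter E S"
    unfolding graph_diameter_def using assms(1,2) by (intro SUP_upper2[of x] SUP_upper2[of y]) auto
qed

theorem mainTheorem4:
  fixes K :: "'a topology" and G :: "'a set set set"
  assumes "is_cantor_set K"
    and "G \<subseteq> cut_vertices K"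
    and "G \<noteq> {}"
    and "\<And>f c. homeomorphic_map K K f \<Longrightarrow> c \<in> G \<Longrightarrow> cut_action f c \<in> G"
  shows "graph_diameter cut_edge G = 2"
proof -
  obtain c0 where "c0 \<in> G"
    using assms(3) by blast
  have G: "G = cut_vertices K"
  proof
    show "cut_vertices K \<subseteq> G"
      using cantor_set_cut_transitive[OF assms(1)] assms(2,4) \<open>c0 \<in> G\<close> by blast
  qed (rule assms(2))
  obtain c d where "c \<in> G" "d \<in> G" "cuts_cross c d"
    using cantor_set_crossing_cuts[OF assms(1)] G by blast
  moreover have "c \<noteq> d"
    using \<open>cuts_cross c d\<close> \<open>c \<in> G\<close> G not_cuts_cross_self by (fastforce simp: cut_vertices_def)
  ultimately show ?thesis
    using cantor_set_common_neighbour[OF assms(1)] G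
    by (intro graph_diameter_eq_2[of c _ d]) (auto simp: cut_edge_def)
qed

end
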